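(* Let $G$ be a non-trivial Polish group such that for every infinite $S\subseteq\mathbb N$ the set $\mathbb A(S)=\{g\in G: \exists s\in S\ g^s=1\}$ is dense in $G$. Then every topological similarity class of $G$ is meagre. Moreover, for every infinite $S\subseteq\mathbb N$ the set $$\mathbb C(S)=\{g\in G:\ \text{there is a sequence } (s_n)\subseteq S \text{ with } g^{s_n}\to 1\}$$ is a dense $G_\delta$ subset of $G$ that is invariant under topological similarity.
   Context: Two elements $f,g$ of a Polish group $G$ are topologically similar if the cyclic subgroups $\langle f\rangle$ and $\langle g\rangle$, with the subspace topologies from $G$, are isomorphic as topological groups. A topological similarity class is an equivalence class of this relation. *)

theory Defs
  imports "HOL-Analysis.Analysis" "HOL-Algebra.Generated_Groups"
begin

definition Polish_top :: "'a topology \<Rightarrow> bool" where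
  "Polish_top Y \<longleftrightarrow> completely_metrizable_space Y \<and> separable_space Y"

definition nowhere_dense_in :: "'a topology \<Rightarrow> 'a set \<Rightarrow> bool" where
  "nowhere_dense_in X S \<longleftrightarrow> S \<subseteq> topspace X \<and> X interior_of (X closure_of S) = {}"

definition meagre_in :: "'a topology \<Rightarrow> 'a set \<Rightarrow> bool" where
  "meagre_in X S \<longleftrightarrow> S \<subseteq> topspace X \<and>
     (\<exists>N :: nat \<Rightarrow> 'a set. (\<forall>n. nowhere_dense_in X (N n)) \<and> S \<subseteq> \<Union> (range N))"

definition Polish_group :: "('a, 'b) monoid_scheme \<Rightarrow> 'a topology \<Rightarrow> bool" where
  "Polish_group G T \<longleftrightarrow> group G \<and> topspace T = carrier G \<and> Polish_top T \<and>
     continuous_map (prod_topology T T) T (\<lambda>(x, y). x \<otimes>\<^bsub>G\<^esub> y) \<and>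
     continuous_map T T (\<lambda>x. inv\<^bsub>G\<^esub> x)"

definition top_similar :: "('a, 'b) monoid_scheme \<Rightarrow> 'a topology \<Rightarrow> 'a \<Rightarrow> 'a \<Rightarrow> bool" where
  "top_similar G T f g \<longleftrightarrow>
     (\<exists>\<phi>. \<phi> \<in> iso (G\<lparr>carrier := generate G {f}\<rparr>) (G\<lparr>carrier := generate G {g}\<rparr>) \<and>
          homeomorphic_map (subtopology T (generate G {f})) (subtopology T (generate G {g})) \<phi>)"

definition top_similarity_class :: "('a, 'b) monoid_scheme \<Rightarrow> 'a topology \<Rightarrow> 'a \<Rightarrow> 'a set" where
  "top_similarity_class G T f = {g \<in> carrier G. top_similar G T f g}"

definition setA :: "('a, 'b) monoid_scheme \<Rightarrow> nat set \<Rightarrow> 'a set" where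
  "setA G S = {g \<in> carrier G. \<exists>s\<in>S. g [^]\<^bsub>G\<^esub> s = \<one>\<^bsub>G\<^esub>}"

definition setC :: "('a, 'b) monoid_scheme \<Rightarrow> 'a topology \<Rightarrow> nat set \<Rightarrow> 'a set" where
  "setC G T S = {g \<in> carrier G. \<exists>s :: nat \<Rightarrow> nat. range s \<subseteq> S \<and>
       limitin T (\<lambda>n. g [^]\<^bsub>G\<^esub> s n) \<one>\<^bsub>G\<^esub> sequentially}"

end

theory Submission
  imports Defs "HOL-Algebra.Multiplicative_Group"
begin

text \<open>\<open>\<bbbC>(S)\<close> contains the dense set \<open>\<bbbA>(S)\<close>, and it is \<open>G\<^sub>\<delta>\<close> because \<open>g \<in> \<bbbC>(S)\<close> means that for
  every \<open>k\<close> some \<open>g\<^sup>s\<close> with \<open>s \<in> S\<close> lies in the \<open>1/(k+1)\<close>-ball around \<open>1\<close>. Membership in \<open>\<bbbC>(S)\<close>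
  depends only on the topological group \<open>\<langle>f\<rangle>\<close>: it passes from \<open>f\<close> to all powers of \<open>f\<close> by
  continuity of \<open>x \<mapsto> x\<^sup>k\<close>, and a topological isomorphism \<open>\<langle>f\<rangle> \<rightarrow> \<langle>g\<rangle>\<close> sending a power \<open>h\<close> of \<open>f\<close>
  to \<open>g\<close> carries \<open>h\<^bsup>s n\<^esup> \<rightarrow> 1\<close> to \<open>g\<^bsup>s n\<^esup> \<rightarrow> 1\<close>. So if \<open>f \<notin> \<bbbC>(S)\<close> for some \<open>S\<close>, the class of \<open>f\<close>
  lies in the complement of a dense \<open>G\<^sub>\<delta>\<close> set, which is meagre. Otherwise every infinite set of
  exponents contains a sequence along which \<open>f\<^sup>n \<rightarrow> 1\<close>, so \<open>f\<^sup>n \<rightarrow> 1\<close> and \<open>f = 1\<close>. The class of \<open>1\<close>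
  is \<open>{1}\<close>, which is nowhere dense because \<open>G\<close> is not discrete: in a discrete group \<open>\<bbbA>(S) = G\<close>
  for every \<open>S\<close>, which fails for \<open>x \<noteq> 1\<close> and \<open>S\<close> the set of non-multiples of the order of \<open>x\<close>.\<close>

lemma nowhere_dense_in_complement_of_dense_open:
  assumes "openin X U" "X closure_of U = topspace X"
  shows "nowhere_dense_in X (topspace X - U)"
  using assms unfolding nowhere_dense_in_def
  by (simp add: closure_of_closedin closedin_diff interior_of_complement)

lemma meagre_in_countable_Union:
  assumes "countable \<N>" "\<And>N. N \<in> \<N> \<Longrightarrow> nowhere_dense_in X N"
  shows "meagre_in X (\<Union>\<N>)"
proof (cases "\<N> = {}")
  case True
  then show ?thesis
    unfolding meagre_in_def nowhere_dense_in_def by (intro conjI exI[of _ "\<lambda>n. {}"]) auto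
next
  case False
  then have "range (from_nat_into \<N>) = \<N>"
    by (simp add: assms(1) range_from_nat_into)
  moreover have "\<Union>\<N> \<subseteq> topspace X"
    using assms(2) unfolding nowhere_dense_in_def by blast
  ultimately show ?thesis
    using assms(2) from_nat_into[OF False] unfolding meagre_in_def
    by (intro conjI exI[of _ "from_nat_into \<N>"]) auto
qed

lemma meagre_in_subset: "meagre_in X S \<Longrightarrow> S' \<subseteq> S \<Longrightarrow> meagre_in X S'"
  unfolding meagre_in_def by blast

lemma meagre_in_complement_of_dense_gdelta:
  assumes "gdelta_in X S" "X closure_of S = topspace X"
  shows "meagre_in X (topspace X - S)"
proof -
  obtain \<U> where \<U>: "countable \<U>" "\<And>U. U \<in> \<U> \<Longrightarrow> openin X U" "S = \<Inter>\<U>"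
    using assms(1) unfolding gdelta_in_alt intersection_of_def by blast
  have "X closure_of U = topspace X" if "U \<in> \<U>" for U
    using closure_of_mono[of S U X] closure_of_subset_topspace[of X U] assms(2) \<U>(3) that
    by blast
  then have "meagre_in X (\<Union>U\<in>\<U>. topspace X - U)"
    using \<U> by (intro meagre_in_countable_Union) (auto intro: nowhere_dense_in_complement_of_dense_open)
  moreover have "topspace X - S = (\<Union>U\<in>\<U>. topspace X - U)"
    using \<U>(3) by blast
  ultimately show ?thesis by simp
qed

lemma nowhere_dense_in_singleton:
  assumes "t1_space X" "x \<in> topspace X" "\<not> openin X {x}"
  shows "nowhere_dense_in X {x}"
proof -
  have "X interior_of {x} \<noteq> {x}"
    using assms(3) by (metis openin_interior_of)
  then have "X interior_of {x} = {}"
    using interior_of_subset[of X "{x}"] by blast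
  then show ?thesis
    using assms unfolding nowhere_dense_in_def
    by (simp add: closure_of_closedin t1_space_closedin_singleton)
qed

lemma limitin_sequentially_if_subsequences:
  assumes "l \<in> topspace X"
    and "\<And>S. infinite S \<Longrightarrow> 0 \<notin> S \<Longrightarrow> \<exists>s. range s \<subseteq> S \<and> limitin X (x \<circ> s) l sequentially"
  shows "limitin X x l sequentially"
  unfolding limitin_sequentially
proof (intro conjI assms(1) allI impI)
  fix U assume U: "openin X U \<and> l \<in> U"
  define S where "S = {n. 0 < n \<and> x n \<notin> U}"
  show "\<exists>N. \<forall>n\<ge>N. x n \<in> U"
  proof (cases "finite S")
    case True
    then obtain N where "S \<subseteq> {..<N}"
      using finite_nat_bounded by blast
    then have "x n \<in> U" if "Suc N \<le> n" for n
    proof -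
      have "n \<notin> S"
        using \<open>S \<subseteq> {..<N}\<close> that by auto
      then show ?thesis
        using that unfolding S_def by simp
    qed
    then show ?thesis
      by blast
  next
    case False
    moreover have "0 \<notin> S"
      unfolding S_def by simp
    ultimately obtain s where "range s \<subseteq> S" "limitin X (x \<circ> s) l sequentially"
      using assms(2) by blast
    then show ?thesis
      using U unfolding limitin_sequentially S_def by fastforce
  qed
qed

lemma (in group) ex_infinite_set_notin_setA:
  assumes "x \<in> carrier G" "x \<noteq> \<one>"
  shows "\<exists>S. infinite S \<and> 0 \<notin> S \<and> x \<notin> setA G S"
proof -
  define S where "S = {s. \<not> ord x dvd s}"
  have "ord x \<noteq> 1"
    using assms ord_eq_1 by blast
  have "\<exists>s\<in>S. m < s" for m
  proof (cases "ord x dvd m + 1")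
    case True
    then have "\<not> ord x dvd (m + 1) + 1"
      using \<open>ord x \<noteq> 1\<close> by (simp only: dvd_add_right_iff nat_dvd_1_iff_1) simp
    then show ?thesis
      unfolding S_def by (intro bexI[of _ "m + 1 + 1"]) auto
  next
    case False
    then show ?thesis
      unfolding S_def by (intro bexI[of _ "m + 1"]) auto
  qed
  then have "infinite S"
    unfolding infinite_nat_iff_unbounded by blast
  moreover have "x \<notin> setA G S"
    using assms(1) pow_eq_id unfolding setA_def S_def by blast
  ultimately show ?thesis
    unfolding S_def by auto
qed

lemma (in group) group_generate_singleton: "x \<in> carrier G \<Longrightarrow> group (G\<lparr>carrier := generate G {x}\<rparr>)"
  by (intro subgroup_imp_group generate_is_subgroup) auto

lemma (in Metric_space) ex_sequence_limitin_iff_mball: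
  assumes "l \<in> M"
  shows "(\<exists>s. range s \<subseteq> S \<and> limitin mtopology (\<lambda>n. y (s n)) l sequentially) \<longleftrightarrow>
         (\<forall>k::nat. \<exists>n\<in>S. y n \<in> mball l (1 / Suc k))"
proof
  assume "\<exists>s. range s \<subseteq> S \<and> limitin mtopology (\<lambda>n. y (s n)) l sequentially"
  then obtain s where s: "range s \<subseteq> S" and lim: "limitin mtopology (\<lambda>n. y (s n)) l sequentially"
    by blast
  show "\<forall>k::nat. \<exists>n\<in>S. y n \<in> mball l (1 / Suc k)"
  proof
    fix k :: nat
    have "\<forall>\<^sub>F i in sequentially. y (s i) \<in> M \<and> d (y (s i)) l < 1 / Suc k"
      using lim unfolding limitin_metric by simp
    then obtain i where "y (s i) \<in> M" "d (y (s i)) l < 1 / Suc k"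
      unfolding eventually_sequentially by blast
    then show "\<exists>n\<in>S. y n \<in> mball l (1 / Suc k)"
      using s assms by (auto simp: commute)
  qed
next
  assume "\<forall>k::nat. \<exists>n\<in>S. y n \<in> mball l (1 / Suc k)"
  then obtain s where s: "\<And>k. s k \<in> S" and close: "\<And>k. y (s k) \<in> mball l (1 / Suc k)"
    by metis
  have "limitin mtopology (\<lambda>k. y (s k)) l sequentially"
    unfolding limitin_metric
  proof (intro conjI allI impI assms)
    fix \<epsilon> :: real assume "\<epsilon> > 0"
    then obtain N :: nat where N: "1 / Suc N < \<epsilon>"
      using nat_approx_posE by blast
    have "y (s k) \<in> M \<and> d (y (s k)) l < \<epsilon>" if "N \<le> k" for k
    proof -
      have "1 / real (Suc k) \<le> 1 / Suc N"
        using that by (simp add: frac_le)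
      then show ?thesis
        using close[of k] N by (auto simp: commute)
    qed
    then show "\<forall>\<^sub>F k in sequentially. y (s k) \<in> M \<and> d (y (s k)) l < \<epsilon>"
      unfolding eventually_sequentially by blast
  qed
  then show "\<exists>s. range s \<subseteq> S \<and> limitin mtopology (\<lambda>n. y (s n)) l sequentially"
    using s by blast
qed

locale topological_group = group G for G :: "('a, 'b) monoid_scheme" (structure) +
  fixes T :: "'a topology"
  assumes topspace_eq [simp]: "topspace T = carrier G"
    and continuous_mult: "continuous_map (prod_topology T T) T (\<lambda>(x, y). x \<otimes> y)"
    and continuous_inv: "continuous_map T T (\<lambda>x. inv x)"

lemma Polish_group_imp_topological_group: "Polish_group G T \<Longrightarrow> topological_group G T"
  unfolding Polish_group_def topological_group_def topological_group_axioms_def by blast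

context topological_group
begin

lemma continuous_map_mult:
  assumes "continuous_map X T f" "continuous_map X T g"
  shows "continuous_map X T (\<lambda>x. f x \<otimes> g x)"
  using continuous_map_compose[OF continuous_map_pairedI[OF assms] continuous_mult]
  by (simp add: o_def)

lemma continuous_map_mult_left: "a \<in> carrier G \<Longrightarrow> continuous_map T T (\<lambda>x. a \<otimes> x)"
  by (intro continuous_map_mult) (auto simp: continuous_map_id[unfolded id_def])

lemma continuous_map_nat_pow: "continuous_map T T (\<lambda>x. x [^] (n::nat))"
proof (induction n)
  case (Suc n)
  then show ?case
    using continuous_map_mult[OF Suc continuous_map_id[unfolded id_def]] by simp
qed simp

lemma continuous_map_int_pow: "continuous_map T T (\<lambda>x. x [^] (k::int))"
proof (cases "k < 0")
  case True
  then have "(\<lambda>x. x [^] k) = (\<lambda>x. inv x) \<circ> (\<lambda>x. x [^] nat (- k))"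
    by (simp only: int_pow_def2 if_True o_def)
  then show ?thesis
    using continuous_map_compose[OF continuous_map_nat_pow continuous_inv] by simp
next
  case False
  then have "(\<lambda>x. x [^] k) = (\<lambda>x. x [^] nat k)"
    by (simp only: int_pow_def2 if_False)
  then show ?thesis
    using continuous_map_nat_pow by simp
qed

lemma openin_if_openin_singleton_one:
  assumes "openin T {\<one>}" "A \<subseteq> carrier G"
  shows "openin T A"
proof -
  have "openin T {x}" if x: "x \<in> carrier G" for x
  proof -
    have "openin T {y \<in> topspace T. inv x \<otimes> y \<in> {\<one>}}"
      using x by (intro openin_continuous_map_preimage[OF continuous_map_mult_left assms(1)]) simp
    moreover have "{y \<in> topspace T. inv x \<otimes> y \<in> {\<one>}} = {x}"
      using x by auto (metis inv_closed inv_equality inv_inv)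
    ultimately show ?thesis
      by metis
  qed
  then have "openin T (\<Union>x\<in>A. {x})"
    using assms(2) by blast
  then show ?thesis by simp
qed

lemma not_openin_singleton_one:
  assumes "carrier G \<noteq> {\<one>}"
    and "\<And>S. infinite S \<Longrightarrow> 0 \<notin> S \<Longrightarrow> T closure_of (setA G S) = topspace T"
  shows "\<not> openin T {\<one>}"
proof
  assume "openin T {\<one>}"
  have setA_eq: "setA G S = carrier G" if "infinite S" "0 \<notin> S" for S
  proof -
    have "setA G S \<subseteq> carrier G"
      unfolding setA_def by blast
    then have "closedin T (setA G S)"
      using openin_if_openin_singleton_one[OF \<open>openin T {\<one>}\<close>, of "carrier G - setA G S"]
      unfolding closedin_def by auto
    then show ?thesis
      using assms(2)[OF that] by (metis closure_of_closedin topspace_eq)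
  qed
  obtain x where "x \<in> carrier G" "x \<noteq> \<one>"
    using assms(1) by blast
  then show False
    using ex_infinite_set_notin_setA setA_eq by blast
qed

lemma setA_subset_setC: "setA G S \<subseteq> setC G T S"
proof
  fix g assume "g \<in> setA G S"
  then obtain s where "g \<in> carrier G" "s \<in> S" "g [^] s = \<one>"
    unfolding setA_def by blast
  then show "g \<in> setC G T S"
    unfolding setC_def by (intro CollectI conjI exI[of _ "\<lambda>n. s"]) auto
qed

lemma setC_int_pow:
  assumes "f \<in> setC G T S"
  shows "f [^] (k::int) \<in> setC G T S"
proof -
  obtain s where f: "f \<in> carrier G" and s: "range s \<subseteq> S"
    and lim: "limitin T (\<lambda>n. f [^] s n) \<one> sequentially"
    using assms unfolding setC_def by blast
  have "(f [^] k) [^] s n = (f [^] s n) [^] k" for n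
    using f by (simp add: int_pow_pow mult.commute flip: int_pow_int)
  moreover have "limitin T (\<lambda>n. (f [^] s n) [^] k) \<one> sequentially"
    using continuous_map_limit[OF continuous_map_int_pow lim] by (simp add: o_def)
  ultimately have "limitin T (\<lambda>n. (f [^] k) [^] s n) \<one> sequentially"
    by simp
  then show ?thesis
    unfolding setC_def using f s by blast
qed

lemma generate_subset_setC:
  assumes "f \<in> setC G T S"
  shows "generate G {f} \<subseteq> setC G T S"
proof
  fix h assume "h \<in> generate G {f}"
  moreover have "f \<in> carrier G"
    using assms unfolding setC_def by blast
  ultimately obtain k where "h = f [^] (k::int)"
    using generate_pow by blast
  then show "h \<in> setC G T S"
    using setC_int_pow[OF assms] by simp
qed

lemma setC_top_similar:
  assumes f: "f \<in> setC G T S" and g: "g \<in> carrier G" and sim: "top_similar G T f g"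
  shows "g \<in> setC G T S"
proof -
  have fc: "f \<in> carrier G"
    using f unfolding setC_def by blast
  define Hf where "Hf = generate G {f}"
  define Hg where "Hg = generate G {g}"
  have groups: "group (G\<lparr>carrier := Hf\<rparr>)" "group (G\<lparr>carrier := Hg\<rparr>)"
    unfolding Hf_def Hg_def using fc g by (auto intro: group_generate_singleton)
  obtain \<phi> where iso: "\<phi> \<in> iso (G\<lparr>carrier := Hf\<rparr>) (G\<lparr>carrier := Hg\<rparr>)"
    and homeo: "homeomorphic_map (subtopology T Hf) (subtopology T Hg) \<phi>"
    using sim unfolding top_similar_def Hf_def Hg_def by blast
  have hom: "\<phi> \<in> hom (G\<lparr>carrier := Hf\<rparr>) (G\<lparr>carrier := Hg\<rparr>)"
    using iso by (simp add: iso_def)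
  have "g \<in> Hg"
    unfolding Hg_def by (simp add: generate.incl)
  then obtain h where h: "h \<in> Hf" "\<phi> h = g"
    using iso unfolding iso_def bij_betw_def by auto
  obtain s where s: "range s \<subseteq> S" and lim: "limitin T (\<lambda>n. h [^] s n) \<one> sequentially"
    using generate_subset_setC[OF f] h(1) unfolding Hf_def setC_def by blast
  have "h [^] s n \<in> Hf" for n
    using subgroup_int_pow_closed[OF _ h(1), of "int (s n)"] fc unfolding Hf_def
    by (simp add: generate_is_subgroup int_pow_int)
  moreover have "\<one> \<in> Hf"
    unfolding Hf_def by (rule generate.one)
  ultimately have "limitin (subtopology T Hf) (\<lambda>n. h [^] s n) \<one> sequentially"
    using lim by (simp add: limitin_subtopology)
  then have "limitin (subtopology T Hg) (\<lambda>n. \<phi> (h [^] s n)) (\<phi> \<one>) sequentially"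
    using continuous_map_limit[OF homeomorphic_imp_continuous_map[OF homeo]] by (simp add: o_def)
  moreover have "\<phi> \<one> = \<one>"
    using hom_one[OF hom groups] by simp
  moreover have "\<phi> (h [^] s n) = g [^] s n" for n
    using hom_nat_pow[OF hom _ groups, of h "s n"] h by (simp flip: nat_pow_consistent)
  ultimately have "limitin T (\<lambda>n. g [^] s n) \<one> sequentially"
    by (simp add: limitin_subtopology)
  then show ?thesis
    unfolding setC_def using g s by blast
qed

lemma top_similar_sym:
  assumes f: "f \<in> carrier G" and g: "g \<in> carrier G" and sim: "top_similar G T f g"
  shows "top_similar G T g f"
proof -
  define Hf where "Hf = generate G {f}"
  define Hg where "Hg = generate G {g}"
  have "Hf \<subseteq> carrier G" "Hg \<subseteq> carrier G"
    unfolding Hf_def Hg_def using f g generate_incl by auto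
  then have topspaces: "topspace (subtopology T Hf) = Hf" "topspace (subtopology T Hg) = Hg"
    by auto
  have groups: "group (G\<lparr>carrier := Hf\<rparr>)" "group (G\<lparr>carrier := Hg\<rparr>)"
    unfolding Hf_def Hg_def using f g by (auto intro: group_generate_singleton)
  obtain \<phi> where iso: "\<phi> \<in> iso (G\<lparr>carrier := Hf\<rparr>) (G\<lparr>carrier := Hg\<rparr>)"
    and homeo: "homeomorphic_map (subtopology T Hf) (subtopology T Hg) \<phi>"
    using sim unfolding top_similar_def Hf_def Hg_def by blast
  obtain \<psi> where maps: "homeomorphic_maps (subtopology T Hf) (subtopology T Hg) \<phi> \<psi>"
    using homeo homeomorphic_map_maps by blast
  then have homeo': "homeomorphic_map (subtopology T Hg) (subtopology T Hf) \<psi>"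
    using homeomorphic_maps_map by blast
  have "\<psi> y = inv_into Hf \<phi> y" if "y \<in> Hg" for y
  proof (rule inv_into_f_eq[symmetric])
    show "inj_on \<phi> Hf"
      using iso by (simp add: iso_def bij_betw_def)
    show "\<psi> y \<in> Hf"
      using homeomorphic_imp_surjective_map[OF homeo'] that topspaces by blast
    show "\<phi> (\<psi> y) = y"
      using maps that topspaces by (simp add: homeomorphic_maps_map)
  qed
  then have "\<psi> \<in> iso (G\<lparr>carrier := Hg\<rparr>) (G\<lparr>carrier := Hf\<rparr>)"
    using group.iso_eq[OF groups(2) group.iso_set_sym[OF groups(1) iso]] by simp
  then show ?thesis
    unfolding top_similar_def Hf_def[symmetric] Hg_def[symmetric] using homeo' by blast
qed

lemma top_similarity_class_subset_complement_setC:
  assumes "f \<in> carrier G" "f \<notin> setC G T S"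
  shows "top_similarity_class G T f \<subseteq> topspace T - setC G T S"
  using assms setC_top_similar top_similar_sym unfolding top_similarity_class_def by auto

lemma top_similarity_class_one: "top_similarity_class G T \<one> = {\<one>}"
proof -
  have "g = \<one>" if "top_similar G T \<one> g" for g
  proof -
    obtain \<phi> where "bij_betw \<phi> {\<one>} (generate G {g})"
      using \<open>top_similar G T \<one> g\<close> unfolding top_similar_def iso_def generate_one by auto
    then have "generate G {g} = {\<phi> \<one>}"
      by (simp add: bij_betw_def)
    then show ?thesis
      using generate.incl[of g "{g}" G] generate.one[of G "{g}"] by auto
  qed
  moreover have "top_similar G T \<one> \<one>"
    unfolding top_similar_def by (metis id_iso homeomorphic_map_id)
  ultimately show ?thesis
    unfolding top_similarity_class_def by auto
qed

lemma eq_one_if_nat_pow_limit_one: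
  assumes "Hausdorff_space T" "f \<in> carrier G" "limitin T (\<lambda>n. f [^] (n::nat)) \<one> sequentially"
  shows "f = \<one>"
proof -
  have "limitin T (\<lambda>n. f \<otimes> f [^] n) (f \<otimes> \<one>) sequentially"
    using continuous_map_limit[OF continuous_map_mult_left[OF assms(2)] assms(3)] by (simp add: o_def)
  moreover have "limitin T (\<lambda>n. f \<otimes> f [^] n) \<one> sequentially"
    using limitin_sequentially_offset[OF assms(3), of 1] assms(2)
    by (simp only: Suc_eq_plus1[symmetric] nat_pow_Suc2)
  ultimately show ?thesis
    using assms(1,2) limitin_Hausdorff_unique by (metis r_one trivial_limit_sequentially)
qed

lemma eq_one_if_in_all_setC:
  assumes "Hausdorff_space T" "f \<in> carrier G" "\<And>S. infinite S \<Longrightarrow> 0 \<notin> S \<Longrightarrow> f \<in> setC G T S"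
  shows "f = \<one>"
proof (rule eq_one_if_nat_pow_limit_one[OF assms(1,2)])
  show "limitin T (\<lambda>n. f [^] (n::nat)) \<one> sequentially"
    using assms(3) unfolding setC_def by (intro limitin_sequentially_if_subsequences) (auto simp: o_def)
qed

lemma gdelta_in_setC:
  assumes "metrizable_space T"
  shows "gdelta_in T (setC G T S)"
proof -
  obtain M d where "Metric_space M d" and T: "T = Metric_space.mtopology M d"
    using assms unfolding metrizable_space_def by blast
  interpret Metric_space M d by fact
  have "\<one> \<in> M"
    using topspace_eq T by simp
  define U where "U k = (\<Union>s\<in>S. {g \<in> carrier G. g [^] s \<in> mball \<one> (1 / Suc k)})" for k :: nat
  have "openin T {g \<in> carrier G. g [^] s \<in> mball \<one> r}" for s :: nat and r
    using openin_continuous_map_preimage[OF continuous_map_nat_pow openin_mball[folded T]] by simp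
  then have open_U: "openin T (U k)" for k
    unfolding U_def by (intro openin_Union) blast
  have "g \<in> setC G T S \<longleftrightarrow> g \<in> carrier G \<and> (\<forall>k::nat. \<exists>s\<in>S. g [^] s \<in> mball \<one> (1 / Suc k))"
    for g
    unfolding setC_def mem_Collect_eq T
    by (simp only: ex_sequence_limitin_iff_mball[OF \<open>\<one> \<in> M\<close>, of S "\<lambda>n. g [^] n"])
  then have "setC G T S = (\<Inter>k. U k)"
    unfolding U_def by auto
  moreover have "setC G T S \<subseteq> topspace T"
    unfolding setC_def by auto
  ultimately show ?thesis
    unfolding gdelta_in_alt intersection_of_def
    by (intro conjI exI[of _ "range U"]) (auto intro: open_U)
qed

lemma dense_setC: "T closure_of (setA G S) = topspace T \<Longrightarrow> T closure_of (setC G T S) = topspace T"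
  using closure_of_mono[OF setA_subset_setC] closure_of_subset_topspace by (metis subset_antisym)

lemma meagre_in_top_similarity_class:
  assumes "metrizable_space T" "carrier G \<noteq> {\<one>}"
    and dense_setA: "\<And>S. infinite S \<Longrightarrow> 0 \<notin> S \<Longrightarrow> T closure_of (setA G S) = topspace T"
    and f: "f \<in> carrier G"
  shows "meagre_in T (top_similarity_class G T f)"
proof (cases "\<forall>S. infinite S \<and> 0 \<notin> S \<longrightarrow> f \<in> setC G T S")
  case True
  have "nowhere_dense_in T {\<one>}"
    by (rule nowhere_dense_in_singleton[OF metrizable_imp_t1_space[OF assms(1)] _
          not_openin_singleton_one[OF assms(2) dense_setA]]) simp
  then have "meagre_in T {\<one>}"
    using meagre_in_countable_Union[of "{{\<one>}}" T] by simp
  moreover have "f = \<one>"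
    by (rule eq_one_if_in_all_setC[OF metrizable_imp_Hausdorff_space[OF assms(1)] f]) (use True in blast)
  ultimately show ?thesis
    by (simp add: top_similarity_class_one)
next
  case False
  then obtain S where S: "infinite S" "0 \<notin> S" "f \<notin> setC G T S"
    by blast
  have "meagre_in T (topspace T - setC G T S)"
    by (rule meagre_in_complement_of_dense_gdelta[OF gdelta_in_setC[OF assms(1)]
          dense_setC[OF dense_setA[OF S(1,2)]]])
  then show ?thesis
    by (rule meagre_in_subset[OF _ top_similarity_class_subset_complement_setC[OF f S(3)]])
qed

end

theorem mainTheorem13:
  fixes G :: "('a, 'b) monoid_scheme" and T :: "'a topology"
  assumes "Polish_group G T"
    and "carrier G \<noteq> {\<one>\<^bsub>G\<^esub>}"
    and "\<And>S. infinite S \<Longrightarrow> 0 \<notin> S \<Longrightarrow> T closure_of (setA G S) = topspace T"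
  shows "(\<forall>f\<in>carrier G. meagre_in T (top_similarity_class G T f)) \<and>
         (\<forall>S. infinite S \<and> 0 \<notin> S \<longrightarrow>
              T closure_of (setC G T S) = topspace T \<and>
              gdelta_in T (setC G T S) \<and>
              (\<forall>f g. f \<in> setC G T S \<and> g \<in> carrier G \<and> top_similar G T f g \<longrightarrow> g \<in> setC G T S))"
proof -
  interpret topological_group G T
    using assms(1) by (rule Polish_group_imp_topological_group)
  have metrizable: "metrizable_space T"
    using assms(1) by (simp add: Polish_group_def Polish_top_def completely_metrizable_imp_metrizable_space)
  have "\<forall>f\<in>carrier G. meagre_in T (top_similarity_class G T f)"
    using meagre_in_top_similarity_class[OF metrizable assms(2,3)] by blast
  moreover have "T closure_of (setC G T S) = topspace T \<and> gdelta_in T (setC G T S) \<and>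
      (\<forall>f g. f \<in> setC G T S \<and> g \<in> carrier G \<and> top_similar G T f g \<longrightarrow> g \<in> setC G T S)"
    if "infinite S" "0 \<notin> S" for S
    using dense_setC[OF assms(3)[OF that]] gdelta_in_setC[OF metrizable] setC_top_similar by blast
  ultimately show ?thesis
    by blast
qed

end
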